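(* Let $\Delta$ be the hereditary class property "bounded maximum degree" and $\Lambda$ the hereditary class property "bounded connected components". Then $\Delta$ is the decomposition horizon of $\Lambda$. Moreover, $\Lambda^\ast=\Lambda^+=\Delta$.
   Context: Graphs are finite and simple. A hereditary class is a class of graphs closed under isomorphism and induced subgraphs. A hereditary class property is a set $\Pi$ of hereditary classes such that $\mathscr C\in\Pi$, $\mathscr D$ hereditary, $\mathscr D\subseteq\mathscr C$ imply $\mathscr D\in\Pi$. $\Delta$ is the set of hereditary classes $\mathscr C$ for which there is $d$ with every graph in $\mathscr C$ having maximum degree at most $d$; $\Lambda$ is the set of hereditary classes $\mathscr C$ for which there is $c$ with every connected component of every graph in $\mathscr C$ having at most $c$ vertices. For non-decreasing $f:\mathbb N\to\mathbb N$ and positive integer $p$, $\mathscr C$ has an $f$-bounded $\Pi$-decomposition with parameter $p$ if there is $\mathscr D_p\in\Pi$ such that every $G\in\mathscr C$ has a partition $V_1,\dots,V_N$ of $V(G)$ with $N\le f(|G|)$ and $G[V_{i_1}\cup\dots\cup V_{i_p}]\in\mathscr D_p$ for all $i_1,\dots,i_p\in[N]$. $\Pi^+$ (resp. $\Pi^\ast$) is the set of hereditary classes that, for every positive integer $p$, have an $f$-bounded $\Pi$-decomposition with parameter $p$ for some constant function $f$ (resp. some non-decreasing $f$ with $f(n)=n^{o(1)}$). $\Pi$ is a decomposition horizon if $\Pi^\ast=\Pi$; the decomposition horizon of $\Lambda$ is the smallest (under inclusion) decomposition horizon containing $\Lambda$. *)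

theory Defs
  imports Complex_Main
begin

text \<open>Finite simple graphs with vertices drawn from nat (every finite graph is
isomorphic to one of these). A graph is a pair (V, E) with V finite and E a set
of 2-element subsets of V.\<close>

type_synonym ngraph = "nat set \<times> nat set set"

definition verts :: "ngraph \<Rightarrow> nat set" where "verts G = fst G"
definition edges :: "ngraph \<Rightarrow> nat set set" where "edges G = snd G"

definition is_graph :: "ngraph \<Rightarrow> bool" where
  "is_graph G \<longleftrightarrow> finite (verts G) \<and>
     (\<forall>e\<in>edges G. \<exists>x y. x \<noteq> y \<and> x \<in> verts G \<and> y \<in> verts G \<and> e = {x, y})"

definition adj :: "ngraph \<Rightarrow> nat \<Rightarrow> nat \<Rightarrow> bool" where
  "adj G x y \<longleftrightarrow> {x, y} \<in> edges G"

definition induced :: "ngraph \<Rightarrow> nat set \<Rightarrow> ngraph" where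
  "induced G S = (S \<inter> verts G, {e \<in> edges G. e \<subseteq> S})"

definition graph_iso :: "ngraph \<Rightarrow> ngraph \<Rightarrow> bool" where
  "graph_iso G H \<longleftrightarrow> (\<exists>f. bij_betw f (verts G) (verts H) \<and>
     (\<forall>x\<in>verts G. \<forall>y\<in>verts G. adj G x y \<longleftrightarrow> adj H (f x) (f y)))"

definition hereditary :: "ngraph set \<Rightarrow> bool" where
  "hereditary C \<longleftrightarrow> (\<forall>G\<in>C. is_graph G) \<and>
     (\<forall>G\<in>C. \<forall>H. is_graph H \<and> graph_iso G H \<longrightarrow> H \<in> C) \<and>
     (\<forall>G\<in>C. \<forall>S. S \<subseteq> verts G \<longrightarrow> induced G S \<in> C)"

definition hered_property :: "ngraph set set \<Rightarrow> bool" where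
  "hered_property \<Pi> \<longleftrightarrow> (\<forall>C\<in>\<Pi>. hereditary C) \<and>
     (\<forall>C\<in>\<Pi>. \<forall>D. hereditary D \<and> D \<subseteq> C \<longrightarrow> D \<in> \<Pi>)"

definition degree :: "ngraph \<Rightarrow> nat \<Rightarrow> nat" where
  "degree G v = card {u \<in> verts G. adj G u v}"

definition component :: "ngraph \<Rightarrow> nat \<Rightarrow> nat set" where
  "component G v = {u. (adj G)\<^sup>*\<^sup>* v u}"

definition Delta :: "ngraph set set" where
  "Delta = {C. hereditary C \<and> (\<exists>d. \<forall>G\<in>C. \<forall>v\<in>verts G. degree G v \<le> d)}"

definition Lambda :: "ngraph set set" where
  "Lambda = {C. hereditary C \<and> (\<exists>c. \<forall>G\<in>C. \<forall>v\<in>verts G. card (component G v) \<le> c)}"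

text \<open>C has an f-bounded Pi-decomposition with parameter p. The partition is
given as parts P 0, ..., P (N-1) (pairwise disjoint, covering V(G)).\<close>
definition has_decomp :: "ngraph set set \<Rightarrow> ngraph set \<Rightarrow> (nat \<Rightarrow> nat) \<Rightarrow> nat \<Rightarrow> bool" where
  "has_decomp \<Pi> C f p \<longleftrightarrow> (\<exists>D\<in>\<Pi>. \<forall>G\<in>C. \<exists>N P.
      N \<le> f (card (verts G)) \<and>
      (\<Union>i<N. P i) = verts G \<and>
      (\<forall>i<N. \<forall>j<N. i \<noteq> j \<longrightarrow> P i \<inter> P j = {}) \<and>
      (\<forall>idx :: nat \<Rightarrow> nat. (\<forall>k<p. idx k < N) \<longrightarrow>
          induced G (\<Union>k<p. P (idx k)) \<in> D))"

definition plus_closure :: "ngraph set set \<Rightarrow> ngraph set set" where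
  "plus_closure \<Pi> = {C. hereditary C \<and>
     (\<forall>p>0. \<exists>c::nat. has_decomp \<Pi> C (\<lambda>_. c) p)}"

text \<open>f(n) = n^{o(1)}: for every eps > 0, eventually f(n) <= n powr eps.\<close>
definition subpoly :: "(nat \<Rightarrow> nat) \<Rightarrow> bool" where
  "subpoly f \<longleftrightarrow> (\<forall>\<epsilon>::real>0. eventually (\<lambda>n. real (f n) \<le> real n powr \<epsilon>) at_top)"

definition star_closure :: "ngraph set set \<Rightarrow> ngraph set set" where
  "star_closure \<Pi> = {C. hereditary C \<and>
     (\<forall>p>0. \<exists>f. mono f \<and> subpoly f \<and> has_decomp \<Pi> C f p)}"

definition decomposition_horizon :: "ngraph set set \<Rightarrow> bool" where
  "decomposition_horizon \<Pi> \<longleftrightarrow> hered_property \<Pi> \<and> star_closure \<Pi> = \<Pi>"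

definition is_decomposition_horizon_of :: "ngraph set set \<Rightarrow> ngraph set set \<Rightarrow> bool" where
  "is_decomposition_horizon_of \<Pi> L \<longleftrightarrow> decomposition_horizon \<Pi> \<and> L \<subseteq> \<Pi> \<and>
     (\<forall>\<Pi>'. decomposition_horizon \<Pi>' \<and> L \<subseteq> \<Pi>' \<longrightarrow> \<Pi> \<subseteq> \<Pi>')"

end

theory Submission
  imports Defs
begin

text \<open>A vertex and its neighbours lie in one component, so Lambda is contained in Delta.
In a graph of maximum degree d at most (d+1)^r vertices lie within distance r of any vertex,
so a greedy colouring with (d+1)^(2p) colours gives distinct colours to any two vertices at
distance at most 2p. In the union of p colour classes, a component with more than p vertices
would contain p+1 vertices within distance p of one of them; these are pairwise at distance at
most 2p and would need p+1 distinct colours. Hence Delta is contained in Lambda^+.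
Conversely Delta^* = Delta: decomposing the closed neighbourhood of a vertex of degree m into
N <= f(m+1) parts, any two of which induce maximum degree at most d, gives m + 1 <= N (d+1),
which fails for large m when f(n) = n^o(1). So Delta, Lambda^+ and Lambda^* coincide, and every
decomposition horizon containing Lambda contains Lambda^* = Delta.\<close>

lemma adj_commute: "adj G x y \<longleftrightarrow> adj G y x"
  by (simp add: adj_def insert_commute)

lemma adj_in_verts: "is_graph G \<Longrightarrow> adj G x y \<Longrightarrow> x \<in> verts G \<and> y \<in> verts G \<and> x \<noteq> y"
  unfolding is_graph_def adj_def by (auto simp: doubleton_eq_iff)

lemma finite_verts: "is_graph G \<Longrightarrow> finite (verts G)"
  by (simp add: is_graph_def)

lemma verts_induced [simp]: "verts (induced G S) = S \<inter> verts G"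
  by (simp add: induced_def verts_def)

lemma edges_induced [simp]: "edges (induced G S) = {e \<in> edges G. e \<subseteq> S}"
  by (simp add: induced_def edges_def)

lemma adj_induced: "adj (induced G S) x y \<longleftrightarrow> adj G x y \<and> x \<in> S \<and> y \<in> S"
  by (auto simp: adj_def)

lemma is_graph_induced: "is_graph G \<Longrightarrow> is_graph (induced G S)"
  unfolding is_graph_def by fastforce

lemma component_subset: "is_graph G \<Longrightarrow> component G v \<subseteq> insert v (verts G)"
proof
  fix u assume G: "is_graph G" and "u \<in> component G v"
  then have "(adj G)\<^sup>*\<^sup>* v u" by (simp add: component_def)
  then show "u \<in> insert v (verts G)"
    by (induction rule: rtranclp_induct) (auto dest: adj_in_verts[OF G])
qed

lemma finite_component: "is_graph G \<Longrightarrow> finite (component G v)"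
  using component_subset finite_verts finite_subset by (metis finite_insert)

lemma component_induced_subset: "component (induced G S) v \<subseteq> component G v"
proof
  fix u assume "u \<in> component (induced G S) v"
  then have "(adj (induced G S))\<^sup>*\<^sup>* v u" by (simp add: component_def)
  then have "(adj G)\<^sup>*\<^sup>* v u"
    by (rule rtranclp_mono[THEN predicate2D, rotated]) (auto simp: adj_induced)
  then show "u \<in> component G v" by (simp add: component_def)
qed

lemma card_component_iso_le:
  assumes G: "is_graph G" and H: "is_graph H" and iso: "graph_iso G H" and w: "w \<in> verts H"
  shows "\<exists>v\<in>verts G. card (component H w) \<le> card (component G v)"
proof -
  obtain f where bij: "bij_betw f (verts G) (verts H)"
    and f_adj: "\<forall>x\<in>verts G. \<forall>y\<in>verts G. adj G x y \<longleftrightarrow> adj H (f x) (f y)"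
    using iso unfolding graph_iso_def by blast
  obtain v where v: "v \<in> verts G" "w = f v" using bij w by (auto simp: bij_betw_def)
  have "component H w \<subseteq> f ` (component G v \<inter> verts G)"
  proof
    fix u assume "u \<in> component H w"
    then have "(adj H)\<^sup>*\<^sup>* w u" by (simp add: component_def)
    then show "u \<in> f ` (component G v \<inter> verts G)"
    proof (induction rule: rtranclp_induct)
      case base then show ?case using v by (auto simp: component_def)
    next
      case (step y z)
      then obtain x where x: "x \<in> component G v" "x \<in> verts G" "y = f x" by auto
      have "z \<in> verts H" using adj_in_verts[OF H step(2)] by blast
      then obtain x' where x': "x' \<in> verts G" "z = f x'" using bij by (auto simp: bij_betw_def)
      have "adj G x x'" using f_adj x x' step(2) by blast
      then have "x' \<in> component G v"
        using x(1) by (auto simp: component_def intro: rtranclp.rtrancl_into_rtrancl)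
      then show ?case using x' by blast
    qed
  qed
  then have "card (component H w) \<le> card (f ` (component G v \<inter> verts G))"
    using finite_verts[OF G] by (intro card_mono) auto
  also have "\<dots> \<le> card (component G v \<inter> verts G)"
    using finite_verts[OF G] by (intro card_image_le) simp
  also have "\<dots> \<le> card (component G v)"
    using finite_component[OF G] by (intro card_mono) auto
  finally show ?thesis using v by blast
qed

lemma degree_le_card_component:
  assumes G: "is_graph G" shows "degree G v \<le> card (component G v)"
proof -
  have "{u \<in> verts G. adj G u v} \<subseteq> component G v"
  proof
    fix u assume "u \<in> {u \<in> verts G. adj G u v}"
    then have "adj G v u" by (simp add: adj_commute)
    then show "u \<in> component G v" by (simp add: component_def r_into_rtranclp)
  qed
  then show ?thesis unfolding degree_def using finite_component[OF G] by (rule card_mono[rotated])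
qed

definition small_components :: "nat \<Rightarrow> ngraph set" where
  "small_components c = {G. is_graph G \<and> (\<forall>v\<in>verts G. card (component G v) \<le> c)}"

lemma small_components_in_Lambda: "small_components c \<in> Lambda"
proof -
  have "hereditary (small_components c)"
    unfolding hereditary_def
  proof (intro conjI ballI allI impI)
    fix G assume "G \<in> small_components c"
    then show "is_graph G" by (simp add: small_components_def)
  next
    fix G H assume G: "G \<in> small_components c" and H: "is_graph H \<and> graph_iso G H"
    have "card (component H w) \<le> c" if w: "w \<in> verts H" for w
    proof -
      obtain v where "v \<in> verts G" "card (component H w) \<le> card (component G v)"
        using card_component_iso_le[of G H w] G H w by (auto simp: small_components_def)
      then show ?thesis using G by (auto simp: small_components_def)
    qed
    then show "H \<in> small_components c" using H by (simp add: small_components_def)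
  next
    fix G S assume G: "G \<in> small_components c" and "S \<subseteq> verts G"
    then have graph: "is_graph G" by (simp add: small_components_def)
    have "card (component (induced G S) v) \<le> c" if v: "v \<in> verts (induced G S)" for v
    proof -
      have "card (component (induced G S) v) \<le> card (component G v)"
        using finite_component[OF graph] component_induced_subset by (rule card_mono)
      also have "\<dots> \<le> c" using G v by (simp add: small_components_def)
      finally show ?thesis .
    qed
    then show "induced G S \<in> small_components c"
      using is_graph_induced[OF graph] by (simp add: small_components_def)
  qed
  then show ?thesis unfolding Lambda_def small_components_def by auto
qed

lemma Lambda_subset_Delta: "Lambda \<subseteq> Delta"
proof
  fix C assume "C \<in> Lambda"
  then obtain c where hC: "hereditary C" and c: "\<forall>G\<in>C. \<forall>v\<in>verts G. card (component G v) \<le> c"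
    unfolding Lambda_def by blast
  have "degree G v \<le> c" if "G \<in> C" "v \<in> verts G" for G v
  proof -
    have "is_graph G" using hC that(1) by (simp add: hereditary_def)
    then have "degree G v \<le> card (component G v)" by (rule degree_le_card_component)
    then show ?thesis using c that by fastforce
  qed
  then show "C \<in> Delta" using hC unfolding Delta_def by blast
qed

definition nbhd :: "ngraph \<Rightarrow> nat \<Rightarrow> nat \<Rightarrow> nat set" where
  "nbhd G r v = {w. \<exists>j\<le>r. (adj G ^^ j) v w}"

lemma centre_in_nbhd: "v \<in> nbhd G r v"
  unfolding nbhd_def by (intro CollectI exI[of _ 0]) simp

lemma relpowp_adj_commute: "(adj G ^^ j) u w \<Longrightarrow> (adj G ^^ j) w u"
proof (induction j arbitrary: w)
  case 0 then show ?case by simp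
next
  case (Suc j)
  then obtain y where "(adj G ^^ j) u y" "adj G y w" by (auto elim: relpowp_Suc_E)
  then have "(adj G ^^ j) y u" "adj G w y" using Suc.IH adj_commute by metis+
  then show ?case by (rule relpowp_Suc_I2[rotated])
qed

lemma nbhd_commute: "w \<in> nbhd G r v \<Longrightarrow> v \<in> nbhd G r w"
  unfolding nbhd_def using relpowp_adj_commute by blast

lemma nbhd_trans:
  assumes "u \<in> nbhd G a v" "w \<in> nbhd G b u" shows "w \<in> nbhd G (a + b) v"
proof -
  obtain i j where "i \<le> a" "(adj G ^^ i) v u" "j \<le> b" "(adj G ^^ j) u w"
    using assms by (auto simp: nbhd_def)
  then show ?thesis unfolding nbhd_def by (intro CollectI exI[of _ "i + j"]) (auto intro: relpowp_trans)
qed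

lemma nbhd_induced_subset: "nbhd (induced G S) r v \<subseteq> nbhd G r v"
proof -
  have "(adj (induced G S) ^^ j) v w \<Longrightarrow> (adj G ^^ j) v w" for j w
    by (metis adj_induced relpowp_mono)
  then show ?thesis unfolding nbhd_def by blast
qed

lemma nbhd_subset_component: "nbhd G r v \<subseteq> component G v"
  unfolding nbhd_def component_def using relpowp_imp_rtranclp by fastforce

lemma nbhd_Suc: "nbhd G (Suc r) v = nbhd G r v \<union> (\<Union>z\<in>nbhd G r v. {w. adj G z w})"
proof (intro set_eqI iffI)
  fix w assume "w \<in> nbhd G (Suc r) v"
  then obtain j where j: "j \<le> Suc r" "(adj G ^^ j) v w" by (auto simp: nbhd_def)
  show "w \<in> nbhd G r v \<union> (\<Union>z\<in>nbhd G r v. {w. adj G z w})"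
  proof (cases j)
    case 0 then show ?thesis using j by (auto simp: nbhd_def)
  next
    case (Suc i)
    then obtain y where "(adj G ^^ i) v y" "adj G y w" using j by (auto elim: relpowp_Suc_E)
    then show ?thesis using j Suc by (auto simp: nbhd_def)
  qed
next
  fix w assume "w \<in> nbhd G r v \<union> (\<Union>z\<in>nbhd G r v. {w. adj G z w})"
  then show "w \<in> nbhd G (Suc r) v"
    unfolding nbhd_def by (auto intro: relpowp_Suc_I le_SucI)
qed

lemma card_neighbours_le:
  assumes G: "is_graph G" and d: "\<forall>v\<in>verts G. degree G v \<le> d"
  shows "finite {w. adj G z w} \<and> card {w. adj G z w} \<le> d"
proof (cases "z \<in> verts G")
  case True
  have "{w. adj G z w} = {u \<in> verts G. adj G u z}" using adj_in_verts[OF G] adj_commute by blast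
  then show ?thesis using d True finite_verts[OF G] by (auto simp: degree_def)
next
  case False
  then have "{w. adj G z w} = {}" using adj_in_verts[OF G] by blast
  then show ?thesis by simp
qed

lemma card_nbhd_le:
  assumes G: "is_graph G" and d: "\<forall>v\<in>verts G. degree G v \<le> d"
  shows "finite (nbhd G r v) \<and> card (nbhd G r v) \<le> (d + 1) ^ r"
proof (induction r)
  case 0
  have "nbhd G 0 v = {v}" by (auto simp: nbhd_def)
  then show ?case by simp
next
  case (Suc r)
  let ?B = "nbhd G r v" and ?N = "\<Union>z\<in>nbhd G r v. {w. adj G z w}"
  have fin: "finite ?N" using Suc card_neighbours_le[OF G d] by blast
  have "card ?N \<le> (\<Sum>z\<in>?B. card {w. adj G z w})"
    using Suc by (intro card_UN_le) blast
  also have "\<dots> \<le> card ?B * d"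
    using card_neighbours_le[OF G d] sum_bounded_above[of ?B "\<lambda>z. card {w. adj G z w}" d] by simp
  finally have "card (?B \<union> ?N) \<le> card ?B * (d + 1)"
    using card_Un_le[of ?B ?N] by simp
  also have "\<dots> \<le> (d + 1) ^ r * (d + 1)" using Suc by (intro mult_le_mono1) blast
  finally show ?case unfolding nbhd_Suc using Suc fin by (simp add: mult.commute)
qed

text \<open>The balls nbhd G r v grow strictly with r until they exhaust the component of v.\<close>

lemma min_card_component_le_card_nbhd:
  assumes fin: "finite (component G v)"
  shows "min (Suc r) (card (component G v)) \<le> card (nbhd G r v)"
proof (induction r)
  case 0
  have "nbhd G 0 v = {v}" by (auto simp: nbhd_def)
  then show ?case by simp
next
  case (Suc r)
  have fin_nbhd: "finite (nbhd G (Suc r) v)" by (rule finite_subset[OF nbhd_subset_component fin])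
  show ?case
  proof (cases "nbhd G (Suc r) v = nbhd G r v")
    case stable: True
    have "component G v \<subseteq> nbhd G r v"
    proof
      fix u assume "u \<in> component G v"
      then have "(adj G)\<^sup>*\<^sup>* v u" by (simp add: component_def)
      then show "u \<in> nbhd G r v"
      proof (induction rule: rtranclp_induct)
        case base show ?case by (rule centre_in_nbhd)
      next
        case (step y z)
        then have "z \<in> nbhd G (Suc r) v" unfolding nbhd_Suc by blast
        then show ?case using stable by simp
      qed
    qed
    then have "card (component G v) \<le> card (nbhd G (Suc r) v)"
      using fin_nbhd by (simp add: stable card_mono)
    then show ?thesis by simp
  next
    case False
    then have "nbhd G r v \<subset> nbhd G (Suc r) v" using nbhd_Suc by blast
    then have "card (nbhd G r v) < card (nbhd G (Suc r) v)" using fin_nbhd psubset_card_mono by blast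
    then show ?thesis using Suc.IH by simp
  qed
qed

lemma greedy_colouring:
  assumes "finite S" "symp R" "\<And>x. x \<in> S \<Longrightarrow> card {y \<in> S. R x y \<and> y \<noteq> x} < b"
  shows "\<exists>col. (\<forall>x\<in>S. col x < b) \<and> (\<forall>x\<in>S. \<forall>y\<in>S. x \<noteq> y \<longrightarrow> R x y \<longrightarrow> col x \<noteq> col y)"
  using assms(1,3)
proof (induction S rule: finite_induct)
  case empty then show ?case by auto
next
  case (insert x S)
  have "card {y \<in> S. R z y \<and> y \<noteq> z} < b" if "z \<in> S" for z
  proof -
    have "card {y \<in> S. R z y \<and> y \<noteq> z} \<le> card {y \<in> insert x S. R z y \<and> y \<noteq> z}"
      using insert.hyps(1) by (intro card_mono) auto
    then show ?thesis using insert.prems[of z] that by simp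
  qed
  then obtain col where col_lt: "\<forall>z\<in>S. col z < b"
    and col_ne: "\<forall>z\<in>S. \<forall>y\<in>S. z \<noteq> y \<longrightarrow> R z y \<longrightarrow> col z \<noteq> col y"
    using insert.IH by blast
  let ?B = "{y \<in> insert x S. R x y \<and> y \<noteq> x}"
  have "card (col ` ?B) \<le> card ?B" using insert.hyps(1) by (intro card_image_le) simp
  then have fewer_colours: "card (col ` ?B) < b" using insert.prems[of x] by simp
  have "\<not> {..<b} \<subseteq> col ` ?B"
  proof
    assume "{..<b} \<subseteq> col ` ?B"
    then have "card {..<b} \<le> card (col ` ?B)" using insert.hyps(1) by (intro card_mono) auto
    then show False using fewer_colours by simp
  qed
  then obtain k where k: "k < b" "k \<notin> col ` ?B" by auto
  have "\<forall>z\<in>insert x S. (col(x := k)) z < b" using col_lt k by auto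
  moreover have "(col(x := k)) z \<noteq> (col(x := k)) y"
    if "z \<in> insert x S" "y \<in> insert x S" "z \<noteq> y" "R z y" for z y
    using that col_ne k insert.hyps(2) sympD[OF \<open>symp R\<close> \<open>R z y\<close>] by auto
  ultimately show ?case by (intro exI[of _ "col(x := k)"]) blast
qed

lemma distance_colouring:
  assumes G: "is_graph G" and d: "\<forall>v\<in>verts G. degree G v \<le> d"
  obtains col where "\<forall>v\<in>verts G. col v < (d + 1) ^ r"
    and "\<forall>u\<in>verts G. \<forall>w\<in>verts G. u \<noteq> w \<longrightarrow> w \<in> nbhd G r u \<longrightarrow> col u \<noteq> col w"
proof -
  have "card {w \<in> verts G. w \<in> nbhd G r u \<and> w \<noteq> u} < (d + 1) ^ r" for u
  proof -
    have fin: "finite (nbhd G r u)" and card: "card (nbhd G r u) \<le> (d + 1) ^ r"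
      using card_nbhd_le[OF G d] by auto
    have "card {w \<in> verts G. w \<in> nbhd G r u \<and> w \<noteq> u} \<le> card (nbhd G r u - {u})"
      using fin by (intro card_mono) auto
    also have "\<dots> < card (nbhd G r u)" using fin centre_in_nbhd by (rule card_Diff1_less)
    finally show ?thesis using card by simp
  qed
  moreover have "symp (\<lambda>u w. w \<in> nbhd G r u)" using nbhd_commute by (blast intro: sympI)
  ultimately show ?thesis
    using greedy_colouring[of "verts G" "\<lambda>u w. w \<in> nbhd G r u"] finite_verts[OF G] that by blast
qed

lemma card_component_colour_classes_le:
  assumes G: "is_graph G"
    and col: "\<forall>u\<in>verts G. \<forall>w\<in>verts G. u \<noteq> w \<longrightarrow> w \<in> nbhd G (2 * p) u \<longrightarrow> col u \<noteq> col w"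
    and T: "col ` T \<subseteq> I" and I: "finite I" "card I \<le> p" and v: "v \<in> verts (induced G T)"
  shows "card (component (induced G T) v) \<le> p"
proof -
  define H where "H = induced G T"
  have H: "is_graph H" using G is_graph_induced H_def by blast
  have ball_in_T: "nbhd H p v \<subseteq> T \<inter> verts G"
    using nbhd_subset_component component_subset[OF H] v H_def by fastforce
  have "inj_on col (nbhd H p v)"
  proof (rule inj_onI, rule ccontr)
    fix x y assume x: "x \<in> nbhd H p v" and y: "y \<in> nbhd H p v" and "col x = col y" "x \<noteq> y"
    have "y \<in> nbhd H (p + p) x" using nbhd_trans[OF nbhd_commute[OF x] y] .
    then have "y \<in> nbhd G (2 * p) x" using nbhd_induced_subset[of G T] H_def by (auto simp: mult_2)
    then show False using col ball_in_T x y \<open>col x = col y\<close> \<open>x \<noteq> y\<close> by blast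
  qed
  then have "card (nbhd H p v) = card (col ` nbhd H p v)" by (simp add: card_image)
  also have "\<dots> \<le> card I" using ball_in_T T I by (intro card_mono) auto
  finally have "min (Suc p) (card (component H v)) \<le> p"
    using min_card_component_le_card_nbhd[OF finite_component[OF H], of p v] I by simp
  then show ?thesis using H_def by simp
qed

lemma Delta_subset_plus_closure_Lambda: "Delta \<subseteq> plus_closure Lambda"
proof
  fix C assume "C \<in> Delta"
  then obtain d where hC: "hereditary C" and d: "\<forall>G\<in>C. \<forall>v\<in>verts G. degree G v \<le> d"
    unfolding Delta_def by blast
  have "has_decomp Lambda C (\<lambda>_. (d + 1) ^ (2 * p)) p" for p
    unfolding has_decomp_def
  proof (intro bexI[OF _ small_components_in_Lambda[of p]] ballI)
    fix G assume "G \<in> C"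
    then have G: "is_graph G" and dG: "\<forall>v\<in>verts G. degree G v \<le> d"
      using hC d by (auto simp: hereditary_def)
    obtain col where col_lt: "\<forall>v\<in>verts G. col v < (d + 1) ^ (2 * p)"
      and col: "\<forall>u\<in>verts G. \<forall>w\<in>verts G. u \<noteq> w \<longrightarrow> w \<in> nbhd G (2 * p) u \<longrightarrow> col u \<noteq> col w"
      using distance_colouring[OF G dG] by metis
    define P where "P i = {v \<in> verts G. col v = i}" for i
    have "card (component (induced G (\<Union>k<p. P (idx k))) v) \<le> p"
      if "v \<in> verts (induced G (\<Union>k<p. P (idx k)))" for idx v
      using that by (intro card_component_colour_classes_le[OF G col, of _ "idx ` {..<p}"])
        (auto simp: P_def intro: order_trans[OF card_image_le])
    then have "induced G (\<Union>k<p. P (idx k)) \<in> small_components p" for idx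
      using is_graph_induced[OF G] by (simp add: small_components_def)
    moreover have "(\<Union>i<(d + 1) ^ (2 * p). P i) = verts G" using col_lt by (auto simp: P_def)
    moreover have "P i \<inter> P j = {}" if "i \<noteq> j" for i j using that by (auto simp: P_def)
    ultimately show "\<exists>N P. N \<le> (d + 1) ^ (2 * p) \<and> (\<Union>i<N. P i) = verts G \<and>
        (\<forall>i<N. \<forall>j<N. i \<noteq> j \<longrightarrow> P i \<inter> P j = {}) \<and>
        (\<forall>idx. (\<forall>k<p. idx k < N) \<longrightarrow> induced G (\<Union>k<p. P (idx k)) \<in> small_components p)"
      by blast
  qed
  then show "C \<in> plus_closure Lambda" using hC unfolding plus_closure_def by blast
qed

lemma degree_le_parts:
  assumes G: "is_graph G" and cover: "(\<Union>j<N. P j) = verts G" and v: "v \<in> P i"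
    and pairs: "\<And>j. j < N \<Longrightarrow> degree (induced G (P i \<union> P j)) v \<le> d"
  shows "degree G v \<le> N * d"
proof -
  define S where "S = {u \<in> verts G. adj G u v}"
  have parts: "card (S \<inter> P j) \<le> d" if "j < N" for j
  proof -
    let ?H = "induced G (P i \<union> P j)"
    have "S \<inter> P j \<subseteq> {u \<in> verts ?H. adj ?H u v}" using v by (auto simp: S_def adj_induced)
    then have "card (S \<inter> P j) \<le> degree ?H v"
      unfolding degree_def using finite_verts[OF G] by (intro card_mono) auto
    then show ?thesis using pairs[OF that] by simp
  qed
  have S_eq: "(\<Union>j<N. S \<inter> P j) = S" using cover by (auto simp: S_def)
  have "card S \<le> (\<Sum>j<N. card (S \<inter> P j))"
    using card_UN_le[of "{..<N}" "\<lambda>j. S \<inter> P j"] by (simp only: finite_lessThan S_eq)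
  also have "\<dots> \<le> N * d" using sum_bounded_above[of "{..<N}" "\<lambda>j. card (S \<inter> P j)" d] parts by simp
  finally show ?thesis unfolding degree_def S_def .
qed

lemma subpoly_const: "subpoly (\<lambda>_. c)"
  unfolding subpoly_def
proof (intro allI impI)
  fix \<epsilon> :: real assume \<epsilon>: "\<epsilon> > 0"
  define M where "M = (real c + 1) powr (1 / \<epsilon>)"
  have "eventually (\<lambda>n. n \<ge> nat \<lceil>M\<rceil>) at_top" by (rule eventually_ge_at_top)
  then show "eventually (\<lambda>n. real c \<le> real n powr \<epsilon>) at_top"
  proof eventually_elim
    case (elim n)
    then have "M powr \<epsilon> \<le> real n powr \<epsilon>" using \<epsilon> by (intro powr_mono2) (auto simp: M_def)
    moreover have "M powr \<epsilon> = real c + 1" using \<epsilon> by (simp add: M_def powr_powr)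
    ultimately show ?case by simp
  qed
qed

lemma subpoly_eventually_mult_less:
  assumes "subpoly f" shows "\<forall>\<^sub>F n in at_top. f n * c < n"
proof -
  have "\<forall>\<^sub>F n in at_top. real (f n) \<le> real n powr (1 / 2)" using assms unfolding subpoly_def by simp
  moreover have "\<forall>\<^sub>F n in at_top. c\<^sup>2 < n" by (rule eventually_gt_at_top)
  ultimately show ?thesis
  proof eventually_elim
    case (elim n)
    then have "real c < sqrt (real n)" by (intro real_less_rsqrt) (metis of_nat_less_iff of_nat_power)
    have "0 < sqrt (real n)" using elim(2) by simp
    have "real (f n) * real c \<le> sqrt (real n) * real c"
      using elim(1) by (simp add: powr_half_sqrt mult_right_mono)
    also have "\<dots> < sqrt (real n) * sqrt (real n)"
      using \<open>real c < sqrt (real n)\<close> \<open>0 < sqrt (real n)\<close> by (rule mult_strict_left_mono)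
    also have "\<dots> = real n" by simp
    finally show ?case by (metis of_nat_less_iff of_nat_mult)
  qed
qed

lemma induced_closed_neighbourhood:
  assumes G: "is_graph G" and v: "v \<in> verts G"
  shows "degree (induced G (insert v {u \<in> verts G. adj G u v})) v = degree G v"
    and "card (verts (induced G (insert v {u \<in> verts G. adj G u v}))) = degree G v + 1"
proof -
  let ?H = "induced G (insert v {u \<in> verts G. adj G u v})"
  have "{u \<in> verts ?H. adj ?H u v} = {u \<in> verts G. adj G u v}" by (auto simp: adj_induced)
  then show "degree ?H v = degree G v" by (simp add: degree_def)
  have "verts ?H = insert v {u \<in> verts G. adj G u v}" using v by auto
  moreover have "v \<notin> {u \<in> verts G. adj G u v}" using adj_in_verts[OF G] by blast
  ultimately show "card (verts ?H) = degree G v + 1"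
    using finite_verts[OF G] by (simp add: degree_def)
qed

lemma star_closure_Delta_subset: "star_closure Delta \<subseteq> Delta"
proof
  fix C assume "C \<in> star_closure Delta"
  then have hC: "hereditary C" and all_p: "\<forall>p>0. \<exists>f. mono f \<and> subpoly f \<and> has_decomp Delta C f p"
    unfolding star_closure_def by auto
  obtain f where f: "subpoly f" and "has_decomp Delta C f 2"
    using all_p[rule_format, OF pos2] by blast
  then obtain D where "D \<in> Delta" and dec: "\<forall>G\<in>C. \<exists>N P. N \<le> f (card (verts G)) \<and>
      (\<Union>i<N. P i) = verts G \<and> (\<forall>i<N. \<forall>j<N. i \<noteq> j \<longrightarrow> P i \<inter> P j = {}) \<and>
      (\<forall>idx :: nat \<Rightarrow> nat. (\<forall>k<2. idx k < N) \<longrightarrow> induced G (\<Union>k<2. P (idx k)) \<in> D)"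
    unfolding has_decomp_def by blast
  then obtain d where d: "\<forall>G\<in>D. \<forall>v\<in>verts G. degree G v \<le> d" unfolding Delta_def by blast
  obtain n0 where n0: "\<And>n. n \<ge> n0 \<Longrightarrow> f n * (d + 1) < n"
    using subpoly_eventually_mult_less[OF f] unfolding eventually_at_top_linorder by blast
  have "degree G v < n0" if "G \<in> C" "v \<in> verts G" for G v
  proof -
    \<comment> \<open>f bounds the number of parts in terms of the order of the decomposed graph, so we
      decompose the closed neighbourhood of v rather than G itself.\<close>
    define H where "H = induced G (insert v {u \<in> verts G. adj G u v})"
    have G: "is_graph G" using hC that(1) by (simp add: hereditary_def)
    have "insert v {u \<in> verts G. adj G u v} \<subseteq> verts G" using that(2) by blast
    then have "H \<in> C" using hC that(1) unfolding hereditary_def H_def by blast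
    have H: "is_graph H" using is_graph_induced[OF G] H_def by simp
    have degree_H: "degree H v = degree G v" and card_H: "card (verts H) = degree G v + 1"
      using induced_closed_neighbourhood[OF G that(2)] H_def by simp_all
    obtain N P where N: "N \<le> f (card (verts H))" and cover: "(\<Union>i<N. P i) = verts H"
      and pairs: "\<forall>idx :: nat \<Rightarrow> nat. (\<forall>k<2. idx k < N) \<longrightarrow> induced H (\<Union>k<2. P (idx k)) \<in> D"
      using dec[rule_format, OF \<open>H \<in> C\<close>] by blast
    have "v \<in> verts H" using that(2) by (simp add: H_def)
    then obtain i where i: "i < N" "v \<in> P i" unfolding cover[symmetric] by blast
    have "degree (induced H (P i \<union> P j)) v \<le> d" if "j < N" for j
    proof -
      have "(\<Union>k<(2::nat). P (if k = 0 then i else j)) = P i \<union> P j"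
        by (auto simp: numeral_2_eq_2 lessThan_Suc)
      moreover have "\<forall>k<(2::nat). (if k = 0 then i else j) < N" using i that by simp
      ultimately have "induced H (P i \<union> P j) \<in> D" using pairs by metis
      moreover have "v \<in> P i \<inter> verts H" using i cover by blast
      ultimately show ?thesis using d by auto
    qed
    then have "degree H v \<le> N * d" using degree_le_parts[OF H cover i(2)] by blast
    then have "card (verts H) \<le> N * (d + 1)" using card_H degree_H i(1) by simp
    also have "\<dots> \<le> f (card (verts H)) * (d + 1)" using N by (rule mult_le_mono1)
    finally show ?thesis using n0[of "card (verts H)"] card_H by linarith
  qed
  then show "C \<in> Delta" using hC unfolding Delta_def by (blast intro: less_imp_le)
qed

lemma hered_property_Delta: "hered_property Delta"
  unfolding hered_property_def Delta_def by blast

lemma has_decomp_mono: "\<Pi> \<subseteq> \<Pi>' \<Longrightarrow> has_decomp \<Pi> C f p \<Longrightarrow> has_decomp \<Pi>' C f p"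
  unfolding has_decomp_def by (elim bexE, intro bexI) (assumption, blast)

lemma star_closure_mono:
  assumes "\<Pi> \<subseteq> \<Pi>'" shows "star_closure \<Pi> \<subseteq> star_closure \<Pi>'"
proof
  fix C assume "C \<in> star_closure \<Pi>"
  then have "hereditary C" and "\<exists>f. mono f \<and> subpoly f \<and> has_decomp \<Pi>' C f p" if "p > 0" for p
    using that has_decomp_mono[OF assms] unfolding star_closure_def by blast+
  then show "C \<in> star_closure \<Pi>'" unfolding star_closure_def by blast
qed

lemma plus_closure_subset_star_closure: "plus_closure \<Pi> \<subseteq> star_closure \<Pi>"
proof
  fix C assume "C \<in> plus_closure \<Pi>"
  then have "hereditary C" and "\<exists>c. has_decomp \<Pi> C (\<lambda>_. c) p" if "p > 0" for p
    using that unfolding plus_closure_def by blast+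
  moreover have "mono (\<lambda>_. c :: nat)" for c by (simp add: mono_def)
  ultimately show "C \<in> star_closure \<Pi>" unfolding star_closure_def using subpoly_const by blast
qed

lemma subset_plus_closure:
  assumes "\<forall>C\<in>\<Pi>. hereditary C" shows "\<Pi> \<subseteq> plus_closure \<Pi>"
proof
  fix C assume C: "C \<in> \<Pi>"
  have "has_decomp \<Pi> C (\<lambda>_. 1) p" if "p > 0" for p
    unfolding has_decomp_def
  proof (intro bexI[OF _ C] ballI exI[of _ "1::nat"] exI[of _ "\<lambda>_. verts _"] conjI allI impI)
    fix G assume "G \<in> C"
    then have "induced G (verts G) \<in> C" using assms C unfolding hereditary_def by blast
    moreover have "(\<Union>k<p. verts G) = verts G" using that by auto
    ultimately show "induced G (\<Union>k<p. verts G) \<in> C" by simp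
  qed auto
  then show "C \<in> plus_closure \<Pi>" using assms C unfolding plus_closure_def by blast
qed

theorem mainTheorem3:
  shows "is_decomposition_horizon_of Delta Lambda \<and>
         star_closure Lambda = plus_closure Lambda \<and> plus_closure Lambda = Delta"
proof -
  have "Delta \<subseteq> plus_closure Delta" by (rule subset_plus_closure) (simp add: Delta_def)
  then have star_Delta: "star_closure Delta = Delta"
    using star_closure_Delta_subset plus_closure_subset_star_closure by blast
  have star_Lambda: "star_closure Lambda \<subseteq> Delta"
    using star_closure_mono[OF Lambda_subset_Delta] star_Delta by blast
  have horizon: "decomposition_horizon Delta"
    unfolding decomposition_horizon_def using hered_property_Delta star_Delta by blast
  have least: "Delta \<subseteq> \<Pi>" if "decomposition_horizon \<Pi>" "Lambda \<subseteq> \<Pi>" for \<Pi>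
    using star_closure_mono[OF that(2)] that(1) Delta_subset_plus_closure_Lambda
      plus_closure_subset_star_closure unfolding decomposition_horizon_def by blast
  show ?thesis
    unfolding is_decomposition_horizon_of_def
    using horizon least Lambda_subset_Delta Delta_subset_plus_closure_Lambda
      plus_closure_subset_star_closure star_Lambda by blast
qed

end
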